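(* Two pairs of increasing arithmetic progressions $(\alpha n+\beta,\ \gamma m+\delta)$ and $(\tilde\alpha n+\tilde\beta,\ \tilde\gamma m+\tilde\delta)$ (indices $n,m\in\mathbb N$) with irrational relative densities are topologically equivalent at $+\infty$ if and only if $$\frac{\alpha}{\gamma}=\frac{\tilde\alpha}{\tilde\gamma}\quad\text{and}\quad \frac{\beta-\delta}{\gamma}\equiv\frac{\tilde\beta-\tilde\delta}{\tilde\gamma}\pmod{\bigl(1,\tfrac{\alpha}{\gamma}\bigr)},$$ the latter meaning that the difference lies in the additive subgroup of $\mathbb R$ generated by $1$ and $\alpha/\gamma$.
   Context: For a pair of arithmetic progressions $(\alpha n+\beta,\ \gamma m+\delta)$ the relative density is $A=\alpha/\gamma$ and the normalized difference of the free terms is $\tau=(\beta-\delta)/\gamma$. Two pairs of sequences on the real line are topologically equivalent at $+\infty$ if there is a homeomorphism of the line defined in a neighborhood of $+\infty$ which maps the first sequence of the first pair to the first sequence of the second pair and the second sequence of the first pair to the second sequence of the second pair. *)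

theory Defs
  imports "HOL-Analysis.Analysis"
begin

definition AP :: "real \<Rightarrow> real \<Rightarrow> real set" where
  "AP a b = range (\<lambda>n::nat. a * real n + b)"

definition top_equiv_at_top :: "real set \<Rightarrow> real set \<Rightarrow> real set \<Rightarrow> real set \<Rightarrow> bool" where
  "top_equiv_at_top A B A' B' \<longleftrightarrow>
     (\<exists>R R' h g. homeomorphism {R<..} {R'<..} h g \<and> filterlim h at_top at_top \<and>
        h ` (A \<inter> {R<..}) = A' \<inter> {R'<..} \<and> h ` (B \<inter> {R<..}) = B' \<inter> {R'<..})"

definition subgrp_1 :: "real \<Rightarrow> real set" where
  "subgrp_1 a = {of_int k + of_int l * a | k l. True}"

end

theory Submission
  imports Defs
begin

(* An increasing homeomorphism between neighbourhoods of +infinity must send the n-th term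
   of each tail to the n-th term of the corresponding tail, so it preserves the interleaving
   pattern of the two progressions. After normalising by gamma, this pattern is the set of
   lattice points (n, m) lying below the line m = (alpha/gamma) n + s, where
   s = tau + (alpha/gamma) N - M for some index shifts N, M. For an irrational slope this
   set determines the line: a different slope is detected by lattice points far out, and
   a different offset by an integer between two parallel lines, which exists by Kronecker's
   density theorem. Conversely, if the invariants agree, the affine map x |-> c x + d with
   c = gamma'/gamma maps both progressions, up to index shifts, onto the other pair. *)

lemma homeomorphism_at_top_imp_strict_mono_on:
  fixes h g :: "real \<Rightarrow> real"
  assumes hom: "homeomorphism {R<..} {R'<..} h g" and lim: "filterlim h at_top at_top"
  shows "strict_mono_on {R<..} h"
proof -
  have "inj_on h {R<..}" "continuous_on {R<..} h"
    using hom by (auto simp: homeomorphism_def intro: inj_on_inverseI)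
  then have "strict_mono_on {R<..} h \<or> strict_antimono_on {R<..} h"
    by (simp add: injective_eq_monotone_map)
  moreover have "\<not> strict_antimono_on {R<..} h"
  proof
    assume anti: "strict_antimono_on {R<..} h"
    have "eventually (\<lambda>z. h (R + 1) < h z) at_top"
      using lim by (simp add: filterlim_at_top_dense)
    moreover have "eventually (\<lambda>z. h z < h (R + 1)) at_top"
      using eventually_gt_at_top[of "R + 1"] by eventually_elim (use anti in \<open>auto simp: monotone_on_def\<close>)
    ultimately have "eventually (\<lambda>_. False) (at_top :: real filter)"
      by eventually_elim auto
    then show False by simp
  qed
  ultimately show ?thesis by blast
qed

lemma strict_mono_eq_add_if_range_atLeast:
  fixes \<sigma> :: "nat \<Rightarrow> nat"
  assumes mono: "strict_mono \<sigma>" and range: "range \<sigma> = {k..}"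
  shows "\<sigma> n = k + n"
proof (induction n)
  case 0
  obtain i where "\<sigma> i = k" using range by (metis atLeast_iff order.refl rangeE)
  moreover have "\<sigma> 0 \<le> \<sigma> i" using mono by (simp add: strict_mono_less_eq)
  moreover have "\<sigma> 0 \<ge> k" using range by auto
  ultimately show ?case by simp
next
  case (Suc n)
  obtain i where i: "\<sigma> i = k + Suc n" using range by (metis atLeast_iff le_add1 rangeE)
  then have "n < i" using Suc mono by (metis add_Suc_right lessI strict_mono_less)
  then have "\<sigma> (Suc n) \<le> \<sigma> i" using mono by (simp add: strict_mono_less_eq)
  moreover have "\<sigma> n < \<sigma> (Suc n)" using mono by (simp add: strict_mono_Suc_iff)
  ultimately show ?case using i Suc by simp
qed

lemma strict_mono_on_image_tail_eq_shift:
  fixes f :: "nat \<Rightarrow> 'a::linorder" and f' :: "nat \<Rightarrow> 'b::linorder"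
  assumes h: "strict_mono_on S h" and f: "strict_mono f" and f': "strict_mono f'"
    and tail: "f ` {N..} \<subseteq> S" and img: "h ` f ` {N..} = f' ` {N'..}"
  shows "h (f (N + j)) = f' (N' + j)"
proof -
  define \<sigma> where "\<sigma> j = inv f' (h (f (N + j)))" for j
  have inj: "inj f'" using f' by (rule strict_mono_imp_inj_on)
  have \<sigma>: "f' (\<sigma> j) = h (f (N + j)) \<and> \<sigma> j \<ge> N'" for j
  proof -
    have "h (f (N + j)) \<in> f' ` {N'..}" unfolding img[symmetric] by auto
    then obtain n where "n \<ge> N'" "h (f (N + j)) = f' n" by auto
    then show ?thesis by (simp add: \<sigma>_def inv_f_f[OF inj])
  qed
  have "strict_mono \<sigma>"
  proof (rule strict_monoI)
    fix i j :: nat assume "i < j"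
    then have "h (f (N + i)) < h (f (N + j))"
      using tail by (intro strict_mono_onD[OF h]) (auto simp: strict_mono_less[OF f])
    then show "\<sigma> i < \<sigma> j" using \<sigma> by (metis strict_mono_less[OF f'])
  qed
  moreover have "range \<sigma> = {N'..}"
  proof
    show "range \<sigma> \<subseteq> {N'..}" using \<sigma> by auto
    show "{N'..} \<subseteq> range \<sigma>"
    proof
      fix n assume "n \<in> {N'..}"
      then have "f' n \<in> h ` f ` {N..}" unfolding img by auto
      then obtain m where "m \<ge> N" "f' n = h (f m)" by auto
      then have "\<sigma> (m - N) = n" by (metis \<sigma>_def inv_f_f[OF inj] le_add_diff_inverse)
      then show "n \<in> range \<sigma>" by blast
    qed
  qed
  ultimately have "\<sigma> j = N' + j" by (rule strict_mono_eq_add_if_range_atLeast)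
  then show ?thesis using \<sigma> by metis
qed

lemma AP_inter_greaterThan:
  assumes "a > 0"
  obtains N where "AP a b \<inter> {R<..} = (\<lambda>n. a * real n + b) ` {N..}"
proof
  define N where "N = nat (\<lfloor>(R - b) / a\<rfloor> + 1)"
  have "a * real n + b > R \<longleftrightarrow> n \<ge> N" for n
  proof -
    have "a * real n + b > R \<longleftrightarrow> real n > (R - b) / a" using assms by (simp add: field_simps)
    also have "\<dots> \<longleftrightarrow> n \<ge> N" unfolding N_def by linarith
    finally show ?thesis .
  qed
  then show "AP a b \<inter> {R<..} = (\<lambda>n. a * real n + b) ` {N..}" by (auto simp: AP_def)
qed

lemma strict_mono_on_AP_tails_shift:
  assumes "a > 0" "a' > 0" and h: "strict_mono_on {R<..} h"
    and img: "h ` (AP a b \<inter> {R<..}) = AP a' b' \<inter> {R'<..}"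
  obtains N N' where "\<And>j. R < a * real (N + j) + b"
    and "\<And>j. h (a * real (N + j) + b) = a' * real (N' + j) + b'"
proof -
  obtain N where N: "AP a b \<inter> {R<..} = (\<lambda>n. a * real n + b) ` {N..}"
    using AP_inter_greaterThan \<open>a > 0\<close> .
  obtain N' where N': "AP a' b' \<inter> {R'<..} = (\<lambda>n. a' * real n + b') ` {N'..}"
    using AP_inter_greaterThan \<open>a' > 0\<close> .
  have "(\<lambda>n. a * real n + b) ` {N..} \<subseteq> {R<..}" using N by blast
  moreover have "strict_mono (\<lambda>n. a * real n + b)" "strict_mono (\<lambda>n. a' * real n + b')"
    using assms(1,2) by (auto intro!: strict_monoI)
  ultimately have "h (a * real (N + j) + b) = a' * real (N' + j) + b'" for j
    using strict_mono_on_image_tail_eq_shift[OF h, of "\<lambda>n. a * real n + b" "\<lambda>n. a' * real n + b'" N N' j]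
      img N N' by simp
  moreover have "R < a * real (N + j) + b" for j
    using \<open>(\<lambda>n. a * real n + b) ` {N..} \<subseteq> {R<..}\<close> unfolding image_subset_iff
    by (metis atLeast_iff greaterThan_iff le_add1)
  ultimately show thesis using that by blast
qed

lemma top_equiv_at_top_AP_imp_same_order:
  assumes "\<alpha> > 0" "\<gamma> > 0" "\<alpha>' > 0" "\<gamma>' > 0"
    and "top_equiv_at_top (AP \<alpha> \<beta>) (AP \<gamma> \<delta>) (AP \<alpha>' \<beta>') (AP \<gamma>' \<delta>')"
  obtains M N M' N' :: nat where "\<And>n m.
    \<gamma> * real (M + m) + \<delta> \<le> \<alpha> * real (N + n) + \<beta> \<longleftrightarrow>
    \<gamma>' * real (M' + m) + \<delta>' \<le> \<alpha>' * real (N' + n) + \<beta>'"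
proof -
  obtain R R' h g where hom: "homeomorphism {R<..} {R'<..} h g" and "filterlim h at_top at_top"
    and img\<alpha>: "h ` (AP \<alpha> \<beta> \<inter> {R<..}) = AP \<alpha>' \<beta>' \<inter> {R'<..}"
    and img\<gamma>: "h ` (AP \<gamma> \<delta> \<inter> {R<..}) = AP \<gamma>' \<delta>' \<inter> {R'<..}"
    using assms(5) unfolding top_equiv_at_top_def by blast
  then have h: "strict_mono_on {R<..} h" by (intro homeomorphism_at_top_imp_strict_mono_on)
  obtain N N' where N: "\<And>n. R < \<alpha> * real (N + n) + \<beta>"
      and hN: "\<And>n. h (\<alpha> * real (N + n) + \<beta>) = \<alpha>' * real (N' + n) + \<beta>'"
    using strict_mono_on_AP_tails_shift[OF assms(1,3) h img\<alpha>] by blast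
  obtain M M' where M: "\<And>m. R < \<gamma> * real (M + m) + \<delta>"
      and hM: "\<And>m. h (\<gamma> * real (M + m) + \<delta>) = \<gamma>' * real (M' + m) + \<delta>'"
    using strict_mono_on_AP_tails_shift[OF assms(2,4) h img\<gamma>] by blast
  show thesis
  proof
    fix n m
    show "\<gamma> * real (M + m) + \<delta> \<le> \<alpha> * real (N + n) + \<beta> \<longleftrightarrow>
      \<gamma>' * real (M' + m) + \<delta>' \<le> \<alpha>' * real (N' + n) + \<beta>'"
      using strict_mono_on_less_eq[OF h, of "\<gamma> * real (M + m) + \<delta>" "\<alpha> * real (N + n) + \<beta>"] M N
      by (simp only: hN hM greaterThan_iff)
  qed
qed

definition nat_points_below :: "real \<Rightarrow> real \<Rightarrow> (nat \<times> nat) set" where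
  "nat_points_below a s = {(n, m). real m \<le> a * real n + s}"

lemma AP_le_AP_iff_nat_points_below:
  assumes "\<gamma> > 0"
  shows "\<gamma> * real (M + m) + \<delta> \<le> \<alpha> * real (N + n) + \<beta> \<longleftrightarrow>
    (n, m) \<in> nat_points_below (\<alpha> / \<gamma>) ((\<beta> - \<delta>) / \<gamma> + \<alpha> / \<gamma> * real N - real M)"
proof -
  have "\<alpha> / \<gamma> * real n + ((\<beta> - \<delta>) / \<gamma> + \<alpha> / \<gamma> * real N - real M)
      = (\<alpha> * real (N + n) + \<beta> - \<delta>) / \<gamma> - real M"
    using assms by (simp add: field_simps)
  then show ?thesis
    using pos_le_divide_eq[OF assms, of "real (M + m)"] by (simp add: nat_points_below_def algebra_simps)
qed

lemma nat_points_below_mono_imp_slope_le: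
  assumes "a' > 0" and sub: "nat_points_below a' s' \<subseteq> nat_points_below a s"
  shows "a' \<le> a"
proof (rule ccontr)
  assume "\<not> a' \<le> a"
  then have gap: "a' - a > 0" by simp
  obtain n :: nat where "max ((1 + \<bar>s\<bar> + \<bar>s'\<bar>) / (a' - a)) (\<bar>s'\<bar> / a') < real n"
    using reals_Archimedean2 by blast
  then have n: "1 + \<bar>s\<bar> + \<bar>s'\<bar> < (a' - a) * real n" "\<bar>s'\<bar> < a' * real n"
    using gap \<open>a' > 0\<close> by (simp_all add: field_simps)
  define m where "m = nat \<lfloor>a' * real n + s'\<rfloor>"
  have "real m \<le> a' * real n + s'" "a' * real n + s' < real m + 1"
    using n(2) unfolding m_def by linarith+
  moreover have "(n, m) \<in> nat_points_below a s"
    using sub \<open>real m \<le> a' * real n + s'\<close> by (auto simp: nat_points_below_def)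
  ultimately show False
    using n(1) by (simp add: nat_points_below_def left_diff_distrib)
qed

lemma nat_points_below_mono_imp_offset_le:
  assumes "a > 0" "a \<notin> \<rat>" and sub: "nat_points_below a s' \<subseteq> nat_points_below a s"
  shows "s' \<le> s"
proof (rule ccontr)
  assume "\<not> s' \<le> s"
  define d where "d = s' - s"
  have "d > 0" using \<open>\<not> s' \<le> s\<close> d_def by simp
  obtain n0 :: nat where "\<bar>s\<bar> / a < real n0" using reals_Archimedean2 by blast
  then have n0: "a * real n0 + s > 0" using \<open>a > 0\<close> by (simp add: field_simps)
  \<comment> \<open>By Kronecker density, for some \<open>k > 0\<close> the integer \<open>i\<close> lies strictly between the two lines at abscissa \<open>n0 + k\<close>.\<close>
  obtain k i where "k > 0" and ki: "\<bar>of_int k * a - of_int i - (d / 2 - (a * real n0 + s'))\<bar> < d / 2"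
    using sequence_of_fractional_parts_is_dense[OF \<open>a \<notin> \<rat>\<close> half_gt_zero[OF \<open>d > 0\<close>],
        where \<alpha> = "d / 2 - (a * real n0 + s')"] by blast
  define n where "n = n0 + nat k"
  have an: "a * real n = a * real n0 + of_int k * a"
    using \<open>k > 0\<close> unfolding n_def by (simp add: algebra_simps)
  have i: "a * real n + s < of_int i" "of_int i < a * real n + s'"
    using ki an d_def by linarith+
  moreover have "of_int k * a > 0" using \<open>k > 0\<close> \<open>a > 0\<close> by simp
  ultimately have "(0::real) < of_int i" using an n0 by linarith
  with i have "(n, nat i) \<in> nat_points_below a s'" by (simp add: nat_points_below_def)
  then show False using sub i by (auto simp: nat_points_below_def)
qed

lemma nat_points_below_inject:
  assumes "a > 0" "a' > 0" "a \<notin> \<rat>"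
    and eq: "nat_points_below a s = nat_points_below a' s'"
  shows "a = a' \<and> s = s'"
proof
  show "a = a'"
    using nat_points_below_mono_imp_slope_le[of a s a' s'] nat_points_below_mono_imp_slope_le[of a' s' a s]
      assms by auto
  then show "s = s'"
    using nat_points_below_mono_imp_offset_le[of a s s'] nat_points_below_mono_imp_offset_le[of a s' s]
      assms by auto
qed

lemma top_equiv_at_top_AP_imp_same_invariants:
  assumes "\<alpha> > 0" "\<gamma> > 0" "\<alpha>' > 0" "\<gamma>' > 0" "\<alpha> / \<gamma> \<notin> \<rat>"
    and "top_equiv_at_top (AP \<alpha> \<beta>) (AP \<gamma> \<delta>) (AP \<alpha>' \<beta>') (AP \<gamma>' \<delta>')"
  shows "\<alpha> / \<gamma> = \<alpha>' / \<gamma>' \<and> (\<beta> - \<delta>) / \<gamma> - (\<beta>' - \<delta>') / \<gamma>' \<in> subgrp_1 (\<alpha> / \<gamma>)"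
proof -
  obtain M N M' N' :: nat where order: "\<And>n m.
    \<gamma> * real (M + m) + \<delta> \<le> \<alpha> * real (N + n) + \<beta> \<longleftrightarrow>
    \<gamma>' * real (M' + m) + \<delta>' \<le> \<alpha>' * real (N' + n) + \<beta>'"
    using top_equiv_at_top_AP_imp_same_order[OF assms(1-4,6)] by metis
  define s where "s = (\<beta> - \<delta>) / \<gamma> + \<alpha> / \<gamma> * real N - real M"
  define s' where "s' = (\<beta>' - \<delta>') / \<gamma>' + \<alpha>' / \<gamma>' * real N' - real M'"
  have "(n, m) \<in> nat_points_below (\<alpha> / \<gamma>) s \<longleftrightarrow> (n, m) \<in> nat_points_below (\<alpha>' / \<gamma>') s'" for n m
    using order[where n = n and m = m] unfolding s_def s'_def
      AP_le_AP_iff_nat_points_below[OF assms(2)] AP_le_AP_iff_nat_points_below[OF assms(4)] .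
  then have "nat_points_below (\<alpha> / \<gamma>) s = nat_points_below (\<alpha>' / \<gamma>') s'"
    by (simp add: set_eq_iff split_paired_All)
  then have "\<alpha> / \<gamma> = \<alpha>' / \<gamma>'" "s = s'"
    using nat_points_below_inject[OF divide_pos_pos[OF assms(1,2)] divide_pos_pos[OF assms(3,4)] assms(5)]
    by auto
  moreover have "of_int (int N' - int N) * (\<alpha> / \<gamma>) = \<alpha> / \<gamma> * real N' - \<alpha> / \<gamma> * real N"
    by (simp add: algebra_simps)
  ultimately have "(\<beta> - \<delta>) / \<gamma> - (\<beta>' - \<delta>') / \<gamma>' = of_int (int M - int M') + of_int (int N' - int N) * (\<alpha> / \<gamma>)"
    unfolding s_def s'_def by simp
  with \<open>\<alpha> / \<gamma> = \<alpha>' / \<gamma>'\<close> show ?thesis unfolding subgrp_1_def by blast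
qed

lemma affine_image_greaterThan:
  fixes c d R :: real
  assumes "c > 0"
  shows "(\<lambda>x. c * x + d) ` {R<..} = {c * R + d<..}"
proof
  show "{c * R + d<..} \<subseteq> (\<lambda>x. c * x + d) ` {R<..}"
  proof
    fix y assume "y \<in> {c * R + d<..}"
    then have "(y - d) / c \<in> {R<..}" using assms by (simp add: field_simps)
    moreover have "y = c * ((y - d) / c) + d" using assms by simp
    ultimately show "y \<in> (\<lambda>x. c * x + d) ` {R<..}" by blast
  qed
qed (use assms in auto)

lemma homeomorphism_affine_greaterThan:
  fixes c d R :: real
  assumes "c > 0"
  shows "homeomorphism {R<..} {c * R + d<..} (\<lambda>x. c * x + d) (\<lambda>y. (y - d) / c)"
proof (rule homeomorphismI)
  show "(\<lambda>x. c * x + d) ` {R<..} \<subseteq> {c * R + d<..}" "(\<lambda>y. (y - d) / c) ` {c * R + d<..} \<subseteq> {R<..}"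
    using assms by (auto simp: field_simps)
qed (use assms in \<open>auto intro!: continuous_intros\<close>)

lemma filterlim_affine_at_top:
  fixes c d :: real
  assumes "c > 0"
  shows "filterlim (\<lambda>x. c * x + d) at_top at_top"
  using filterlim_tendsto_add_at_top[OF tendsto_const
      filterlim_tendsto_pos_mult_at_top[OF tendsto_const assms filterlim_ident]]
  by (simp add: add.commute)

lemma AP_inter_greaterThan_int:
  assumes "a > 0" "b - a \<le> R"
  shows "AP a b \<inter> {R<..} = range (\<lambda>k::int. a * of_int k + b) \<inter> {R<..}"
proof -
  have nonneg: "k \<ge> 0" if "R < a * of_int k + b" for k :: int
  proof -
    have "a * (-1) < a * of_int k" using that assms(2) by linarith
    then have "(-1::real) < of_int k" using \<open>a > 0\<close> by (simp only: mult_less_cancel_left_pos)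
    then show ?thesis by linarith
  qed
  show ?thesis
  proof (intro set_eqI iffI)
    fix x assume "x \<in> AP a b \<inter> {R<..}"
    then obtain n :: nat where "x = a * of_int (int n) + b" "R < x" by (auto simp: AP_def)
    then show "x \<in> range (\<lambda>k::int. a * of_int k + b) \<inter> {R<..}" by blast
  next
    fix x assume "x \<in> range (\<lambda>k::int. a * of_int k + b) \<inter> {R<..}"
    then obtain k :: int where k: "x = a * of_int k + b" "R < x" by blast
    with nonneg have "x = a * real (nat k) + b" by simp
    then show "x \<in> AP a b \<inter> {R<..}" using k(2) by (auto simp: AP_def)
  qed
qed

lemma affine_image_int_AP:
  fixes a b c d a' b' :: real and l :: int
  assumes "c * a = a'" "c * b + d = a' * of_int l + b'"
  shows "(\<lambda>x. c * x + d) ` range (\<lambda>k::int. a * of_int k + b) = range (\<lambda>k::int. a' * of_int k + b')"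
proof -
  have "(\<lambda>x. c * x + d) \<circ> (\<lambda>k::int. a * of_int k + b) = (\<lambda>k. a' * of_int k + b') \<circ> (\<lambda>k. k + l)"
    using assms by (auto simp: algebra_simps)
  moreover have "range (\<lambda>k::int. k + l) = UNIV" by (metis surj_plus_right add.commute)
  ultimately show ?thesis by (metis image_comp)
qed

lemma affine_image_AP_inter_greaterThan:
  fixes c d :: real and l :: int
  assumes "c > 0" "a > 0" "a' > 0" "c * a = a'" "c * b + d = a' * of_int l + b'"
    and "b - a \<le> R" "b' - a' \<le> c * R + d"
  shows "(\<lambda>x. c * x + d) ` (AP a b \<inter> {R<..}) = AP a' b' \<inter> {c * R + d<..}"
proof -
  have "inj (\<lambda>x. c * x + d)" using \<open>c > 0\<close> by (auto intro: injI)
  then show ?thesis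
    using assms by (simp add: AP_inter_greaterThan_int image_Int affine_image_int_AP affine_image_greaterThan)
qed

lemma top_equiv_at_top_AP_if_affine:
  fixes c d :: real and k l :: int
  assumes "c > 0" "\<alpha> > 0" "\<gamma> > 0" "c * \<alpha> = \<alpha>'" "c * \<gamma> = \<gamma>'"
    and "c * \<beta> + d = \<alpha>' * of_int l + \<beta>'" "c * \<delta> + d = \<gamma>' * of_int k + \<delta>'"
  shows "top_equiv_at_top (AP \<alpha> \<beta>) (AP \<gamma> \<delta>) (AP \<alpha>' \<beta>') (AP \<gamma>' \<delta>')"
proof -
  \<comment> \<open>Integer-indexed terms above \<open>R\<close>, resp. \<open>c * R + d\<close>, have nonnegative indices.\<close>
  define R where "R = max (max (\<beta> - \<alpha>) (\<delta> - \<gamma>)) (max ((\<beta>' - \<alpha>' - d) / c) ((\<delta>' - \<gamma>' - d) / c))"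
  have "(\<beta>' - \<alpha>' - d) / c \<le> R" "(\<delta>' - \<gamma>' - d) / c \<le> R"
    by (auto simp: R_def)
  then have "\<beta>' - \<alpha>' - d \<le> R * c" "\<delta>' - \<gamma>' - d \<le> R * c"
    using \<open>c > 0\<close> by (simp_all only: pos_divide_le_eq)
  then have bounds: "\<beta> - \<alpha> \<le> R" "\<delta> - \<gamma> \<le> R" "\<beta>' - \<alpha>' \<le> c * R + d" "\<delta>' - \<gamma>' \<le> c * R + d"
    by (auto simp: R_def mult.commute)
  have "\<alpha>' > 0" "\<gamma>' > 0" using assms by auto
  show ?thesis
    unfolding top_equiv_at_top_def
  proof (intro exI conjI)
    show "homeomorphism {R<..} {c * R + d<..} (\<lambda>x. c * x + d) (\<lambda>y. (y - d) / c)"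
      using \<open>c > 0\<close> by (rule homeomorphism_affine_greaterThan)
    show "filterlim (\<lambda>x. c * x + d) at_top at_top"
      using \<open>c > 0\<close> by (rule filterlim_affine_at_top)
    show "(\<lambda>x. c * x + d) ` (AP \<alpha> \<beta> \<inter> {R<..}) = AP \<alpha>' \<beta>' \<inter> {c * R + d<..}"
      by (rule affine_image_AP_inter_greaterThan) (use assms \<open>\<alpha>' > 0\<close> bounds in auto)
    show "(\<lambda>x. c * x + d) ` (AP \<gamma> \<delta> \<inter> {R<..}) = AP \<gamma>' \<delta>' \<inter> {c * R + d<..}"
      by (rule affine_image_AP_inter_greaterThan) (use assms \<open>\<gamma>' > 0\<close> bounds in auto)
  qed
qed

lemma top_equiv_at_top_AP_if_same_invariants:
  assumes "\<alpha> > 0" "\<gamma> > 0" "\<alpha>' > 0" "\<gamma>' > 0" "\<alpha> / \<gamma> = \<alpha>' / \<gamma>'"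
    and "(\<beta> - \<delta>) / \<gamma> - (\<beta>' - \<delta>') / \<gamma>' \<in> subgrp_1 (\<alpha> / \<gamma>)"
  shows "top_equiv_at_top (AP \<alpha> \<beta>) (AP \<gamma> \<delta>) (AP \<alpha>' \<beta>') (AP \<gamma>' \<delta>')"
proof -
  obtain k l :: int where kl: "(\<beta> - \<delta>) / \<gamma> - (\<beta>' - \<delta>') / \<gamma>' = of_int k + of_int l * (\<alpha> / \<gamma>)"
    using assms(6) unfolding subgrp_1_def by blast
  define c where "c = \<gamma>' / \<gamma>"
  define d where "d = \<delta>' - c * \<delta> - \<gamma>' * of_int k"
  have "c > 0" "c * \<alpha> = \<alpha>'" "c * \<gamma> = \<gamma>'"
    using assms unfolding c_def by (auto simp: field_simps)
  moreover have "c * \<beta> + d = \<alpha>' * of_int l + \<beta>'"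
  proof -
    have "(\<beta> - \<delta>) / \<gamma> = (\<beta>' - \<delta>') / \<gamma>' + of_int k + of_int l * (\<alpha>' / \<gamma>')"
      using kl unfolding assms(5) by linarith
    then have "c * (\<beta> - \<delta>) = \<gamma>' * ((\<beta>' - \<delta>') / \<gamma>' + of_int k + of_int l * (\<alpha>' / \<gamma>'))"
      unfolding c_def by (metis times_divide_eq_left times_divide_eq_right)
    also have "\<dots> = \<beta>' - \<delta>' + \<gamma>' * of_int k + of_int l * \<alpha>'"
      using \<open>\<gamma>' > 0\<close> by (simp add: field_simps)
    finally show ?thesis unfolding d_def by (simp add: algebra_simps)
  qed
  moreover have "c * \<delta> + d = \<gamma>' * of_int (- k) + \<delta>'" unfolding d_def by simp
  ultimately show ?thesis using assms by (intro top_equiv_at_top_AP_if_affine)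
qed

theorem lemma6:
  fixes \<alpha> \<beta> \<gamma> \<delta> \<alpha>' \<beta>' \<gamma>' \<delta>' :: real
  assumes "\<alpha> > 0" "\<gamma> > 0" "\<alpha>' > 0" "\<gamma>' > 0"
    and "\<alpha> / \<gamma> \<notin> \<rat>" "\<alpha>' / \<gamma>' \<notin> \<rat>"
  shows "top_equiv_at_top (AP \<alpha> \<beta>) (AP \<gamma> \<delta>) (AP \<alpha>' \<beta>') (AP \<gamma>' \<delta>') \<longleftrightarrow>
    (\<alpha> / \<gamma> = \<alpha>' / \<gamma>' \<and>
     (\<beta> - \<delta>) / \<gamma> - (\<beta>' - \<delta>') / \<gamma>' \<in> subgrp_1 (\<alpha> / \<gamma>))"
proof
  assume "top_equiv_at_top (AP \<alpha> \<beta>) (AP \<gamma> \<delta>) (AP \<alpha>' \<beta>') (AP \<gamma>' \<delta>')"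
  then show "\<alpha> / \<gamma> = \<alpha>' / \<gamma>' \<and> (\<beta> - \<delta>) / \<gamma> - (\<beta>' - \<delta>') / \<gamma>' \<in> subgrp_1 (\<alpha> / \<gamma>)"
    by (rule top_equiv_at_top_AP_imp_same_invariants[OF assms(1-5)])
next
  assume "\<alpha> / \<gamma> = \<alpha>' / \<gamma>' \<and> (\<beta> - \<delta>) / \<gamma> - (\<beta>' - \<delta>') / \<gamma>' \<in> subgrp_1 (\<alpha> / \<gamma>)"
  then show "top_equiv_at_top (AP \<alpha> \<beta>) (AP \<gamma> \<delta>) (AP \<alpha>' \<beta>') (AP \<gamma>' \<delta>')"
    using top_equiv_at_top_AP_if_same_invariants[OF assms(1-4)] by blast
qed

end
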